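(* Let $V=K[y_1,\dots,y_s]$ be a polynomial ring over a field $K$, bigraded by $\operatorname{bideg}(y_i)=(d_i,1)$ with integers $d_i\ge1$, and let $M$ be a finitely generated bigraded $V$-module. For each $k$ with $M_{( *,k)}:=\bigoplus_d M_{(d,k)}\neq0$ put $\alpha_M(k)=\min\{d:M_{(d,k)}\neq0\}$ and $\omega_M(k)=\max\{d:M_{(d,k)}\neq0\}$. Then either $M_{( *,k)}=0$ for all $k\gg0$, or there exist integers $a,b,c,e$ such that $\alpha_M(k)=ak+b$ and $\omega_M(k)=ck+e$ for all $k\gg0$. *)

theory Defs
  imports Complex_Main "HOL-Library.Poly_Mapping"
begin

text \<open>Polynomial ring V = K[y_i | i :: 'v] in finitely many variables indexed by a
  finite type 'v (so s = CARD('v)), represented as finitely supported maps from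
  monomials (exponent vectors) to coefficients in K.\<close>
type_synonym ('v, 'k) mpoly = "('v \<Rightarrow>\<^sub>0 nat) \<Rightarrow>\<^sub>0 'k"

definition mono_bideg :: "('v::finite \<Rightarrow> int) \<Rightarrow> ('v \<Rightarrow>\<^sub>0 nat) \<Rightarrow> int \<times> int" where
  "mono_bideg dg a = ((\<Sum>i\<in>UNIV. int (Poly_Mapping.lookup a i) * dg i), (\<Sum>i\<in>UNIV. int (Poly_Mapping.lookup a i)))"

definition bihomogeneous :: "('v::finite \<Rightarrow> int) \<Rightarrow> ('v, 'k::zero) mpoly \<Rightarrow> int \<Rightarrow> int \<Rightarrow> bool" where
  "bihomogeneous dg p e j \<longleftrightarrow> (\<forall>a \<in> Poly_Mapping.keys p. mono_bideg dg a = (e, j))"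

text \<open>M (carrier: the type 'm, with V-scalar multiplication scale) is a bigraded
  V-module with homogeneous components Mg d k = M_(d,k):
  each component is an additive subgroup, V_(e,j) M_(d,k) \<subseteq> M_(d+e,k+j),
  and M is the internal direct sum of its components.\<close>
definition bigraded_module ::
  "('v::finite \<Rightarrow> int) \<Rightarrow> (('v, 'k::field) mpoly \<Rightarrow> 'm::ab_group_add \<Rightarrow> 'm)
     \<Rightarrow> (int \<Rightarrow> int \<Rightarrow> 'm set) \<Rightarrow> bool" where
  "bigraded_module dg scale Mg \<longleftrightarrow>
     module scale \<and>
     (\<forall>d k. 0 \<in> Mg d k \<and> (\<forall>x\<in>Mg d k. \<forall>y\<in>Mg d k. x + y \<in> Mg d k)) \<and>
     (\<forall>p e j d k x. bihomogeneous dg p e j \<longrightarrow> x \<in> Mg d k \<longrightarrow> scale p x \<in> Mg (d + e) (k + j)) \<and>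
     (\<forall>m. \<exists>!f :: int \<times> int \<Rightarrow> 'm.
          finite {q. f q \<noteq> 0} \<and> (\<forall>d k. f (d, k) \<in> Mg d k) \<and> m = (\<Sum>q\<in>{q. f q \<noteq> 0}. f q))"

definition finitely_generated_module ::
  "('r::comm_ring_1 \<Rightarrow> 'm::ab_group_add \<Rightarrow> 'm) \<Rightarrow> bool" where
  "finitely_generated_module scale \<longleftrightarrow> (\<exists>G. finite G \<and> module.span scale G = UNIV)"

end

theory Submission
  imports Defs "HOL-Library.Infinite_Set" "HOL-Library.Product_Plus"
begin

text \<open>
  The bidegrees \<open>(d, k)\<close> with \<open>Mg d k \<noteq> {0}\<close> form a finite union of translates of the sets
  \<open>{(\<Sum>\<^sub>i b\<^sub>i d\<^sub>i, \<Sum>\<^sub>i b\<^sub>i) | b \<in> C}\<close>, one for each homogeneous component \<open>h\<close> of a generator,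
  where \<open>C = {b | y\<^sup>b h \<noteq> 0}\<close> is a down-closed set of exponent vectors. For down-closed \<open>C\<close>
  the least first coordinate in row \<open>k\<close> is eventually linear in \<open>k\<close>, by induction on the number
  of variables: for a variable \<open>y\<^sub>j\<close> of least weight, Dickson's lemma makes the slices of \<open>C\<close>
  with fixed \<open>j\<close>-th exponent stabilise, so \<open>C\<close> is the union of the part closed under raising
  the \<open>j\<close>-th exponent, whose row minima have slope \<open>d\<^sub>j\<close>, and finitely many translated slices
  in fewer variables. Eventually linear row minima survive translations and finite unions, and
  row maxima are row minima for the weights \<open>-d\<^sub>i\<close>.
\<close>

section \<open>Eventually linear edges of sets of bidegrees\<close>

definition rows_vanish :: "(int \<times> int) set \<Rightarrow> bool" where
  "rows_vanish S \<longleftrightarrow> (\<forall>\<^sub>F k in at_top. \<forall>d. (d, k) \<notin> S)"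

definition linear_lower_edge :: "(int \<times> int) set \<Rightarrow> int \<Rightarrow> int \<Rightarrow> bool" where
  "linear_lower_edge S a b \<longleftrightarrow>
     (\<forall>\<^sub>F k in at_top. (a * k + b, k) \<in> S \<and> (\<forall>d. (d, k) \<in> S \<longrightarrow> a * k + b \<le> d))"

definition eventually_linear_lower_edge :: "(int \<times> int) set \<Rightarrow> bool" where
  "eventually_linear_lower_edge S \<longleftrightarrow> rows_vanish S \<or> (\<exists>a b. linear_lower_edge S a b)"

definition shift :: "int \<times> int \<Rightarrow> (int \<times> int) set \<Rightarrow> (int \<times> int) set" where
  "shift q S = (\<lambda>p. p + q) ` S"

lemma eventually_linear_le_or_ge:
  fixes a b a' b' :: int
  shows "(\<forall>\<^sub>F k in at_top. a * k + b \<le> a' * k + b') \<or> (\<forall>\<^sub>F k in at_top. a' * k + b' \<le> a * k + b)"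
proof -
  have le: "\<forall>\<^sub>F k in at_top. a * k + b \<le> a' * k + b'"
    if "a < a' \<or> a = a' \<and> b \<le> b'" for a b a' b' :: int
  proof (rule eventually_at_top_linorderI)
    fix k :: int assume k: "\<bar>b - b'\<bar> \<le> k"
    show "a * k + b \<le> a' * k + b'"
    proof (cases "a = a'")
      case False
      with that k have "(a' - a) * k \<ge> 1 * k" by (intro mult_right_mono) auto
      with k show ?thesis by (simp add: algebra_simps)
    qed (use that in auto)
  qed
  show ?thesis
    using le[of a a' b b'] le[of a' a b' b] by force
qed

lemma linear_lower_edge_Un:
  assumes "linear_lower_edge S a b" "linear_lower_edge T a' b'"
    and "\<forall>\<^sub>F k in at_top. a * k + b \<le> a' * k + b'"
  shows "linear_lower_edge (S \<union> T) a b"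
  using assms unfolding linear_lower_edge_def
  by eventually_elim (auto intro: order_trans)

lemma linear_lower_edge_Un_vanish:
  assumes "linear_lower_edge S a b" "rows_vanish T"
  shows "linear_lower_edge (S \<union> T) a b"
  using assms unfolding linear_lower_edge_def rows_vanish_def
  by eventually_elim blast

lemma rows_vanish_Un:
  assumes "rows_vanish S" "rows_vanish T"
  shows "rows_vanish (S \<union> T)"
  using assms unfolding rows_vanish_def by eventually_elim blast

lemma eventually_linear_lower_edge_Un:
  assumes "eventually_linear_lower_edge S" "eventually_linear_lower_edge T"
  shows "eventually_linear_lower_edge (S \<union> T)"
proof -
  have "linear_lower_edge (S \<union> T) a b \<or> linear_lower_edge (S \<union> T) a' b'"
    if "linear_lower_edge S a b" "linear_lower_edge T a' b'" for a b a' b'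
    using eventually_linear_le_or_ge[of a b a' b'] linear_lower_edge_Un[OF that]
      linear_lower_edge_Un[OF that(2,1)] by (auto simp: sup_commute)
  then show ?thesis
    using assms rows_vanish_Un linear_lower_edge_Un_vanish[of S _ _ T]
      linear_lower_edge_Un_vanish[of T _ _ S]
    unfolding eventually_linear_lower_edge_def by (metis sup_commute)
qed

lemma eventually_linear_lower_edge_UN:
  assumes "finite A" "\<And>x. x \<in> A \<Longrightarrow> eventually_linear_lower_edge (S x)"
  shows "eventually_linear_lower_edge (\<Union>x\<in>A. S x)"
  using assms
proof (induction A rule: finite_induct)
  case empty
  then show ?case by (simp add: eventually_linear_lower_edge_def rows_vanish_def)
qed (simp add: eventually_linear_lower_edge_Un)

lemma eventually_linear_lower_edge_shift:
  assumes "eventually_linear_lower_edge S"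
  shows "eventually_linear_lower_edge (shift q S)"
proof -
  obtain u v where q: "q = (u, v)" by (cases q)
  have mem: "(d, k) \<in> shift q S \<longleftrightarrow> (d - u, k - v) \<in> S" for d k
    unfolding shift_def q by (force simp: image_iff)
  have shifted: "\<forall>\<^sub>F k in at_top. P (k - v)" if ev: "\<forall>\<^sub>F k in at_top. P k" for P :: "int \<Rightarrow> bool"
  proof -
    obtain N where "\<forall>k\<ge>N. P k" using ev unfolding eventually_at_top_linorder by blast
    then show ?thesis unfolding eventually_at_top_linorder by (intro exI[of _ "N + v"]) auto
  qed
  have "linear_lower_edge (shift q S) a (b + u - a * v)" if "linear_lower_edge S a b" for a b
    using shifted[OF that[unfolded linear_lower_edge_def]] unfolding linear_lower_edge_def mem
    by eventually_elim (auto simp: algebra_simps)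
  moreover have "rows_vanish (shift q S)" if "rows_vanish S"
    using shifted[OF that[unfolded rows_vanish_def]] unfolding rows_vanish_def mem
    by eventually_elim (metis diff_add_cancel)
  ultimately show ?thesis
    using assms unfolding eventually_linear_lower_edge_def by blast
qed

definition mirror :: "(int \<times> int) set \<Rightarrow> (int \<times> int) set" where
  "mirror S = (\<lambda>(d, k). (- d, k)) ` S"

lemma mem_mirror: "(d, k) \<in> mirror S \<longleftrightarrow> (- d, k) \<in> S"
  unfolding mirror_def by (force simp: image_iff)

lemma mirror_UN: "mirror (\<Union>x\<in>X. S x) = (\<Union>x\<in>X. mirror (S x))"
  unfolding mirror_def by (rule image_UN)

lemma eventually_linear_edges:
  assumes lower: "eventually_linear_lower_edge S" and upper: "eventually_linear_lower_edge (mirror S)"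
  shows "(\<exists>k0. \<forall>k\<ge>k0. \<forall>d. (d, k) \<notin> S)
    \<or> (\<exists>a b c e k0 :: int. \<forall>k\<ge>k0.
          (a * k + b, k) \<in> S \<and> (\<forall>d. (d, k) \<in> S \<longrightarrow> a * k + b \<le> d) \<and>
          (c * k + e, k) \<in> S \<and> (\<forall>d. (d, k) \<in> S \<longrightarrow> d \<le> c * k + e))"
proof (cases "rows_vanish S")
  case True
  then show ?thesis unfolding rows_vanish_def eventually_at_top_linorder by blast
next
  case False
  with lower obtain a b where ab: "linear_lower_edge S a b"
    unfolding eventually_linear_lower_edge_def by blast
  have "\<not> rows_vanish (mirror S)"
  proof
    assume "rows_vanish (mirror S)"
    with ab have "\<forall>\<^sub>F k in at_top. (a * k + b, k) \<in> S \<and> (\<forall>d. (- d, k) \<notin> S)"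
      unfolding rows_vanish_def linear_lower_edge_def mem_mirror by eventually_elim blast
    then obtain k where "(a * k + b, k) \<in> S" "\<forall>d. (- d, k) \<notin> S"
      using eventually_happens'[OF trivial_limit_at_top_linorder] by blast
    then show False by (metis minus_minus)
  qed
  with upper obtain a' b' where ab': "linear_lower_edge (mirror S) a' b'"
    unfolding eventually_linear_lower_edge_def by blast
  have "\<forall>\<^sub>F k in at_top.
          (a * k + b, k) \<in> S \<and> (\<forall>d. (d, k) \<in> S \<longrightarrow> a * k + b \<le> d) \<and>
          (- a' * k + - b', k) \<in> S \<and> (\<forall>d. (d, k) \<in> S \<longrightarrow> d \<le> - a' * k + - b')"
    using ab ab' unfolding linear_lower_edge_def mem_mirror
    by eventually_elim (auto simp: minus_add_distrib dest: spec[of _ "- _"])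
  then show ?thesis unfolding eventually_at_top_linorder by blast
qed

section \<open>Dickson's lemma\<close>

definition down_closed :: "('v \<Rightarrow> nat) set \<Rightarrow> bool" where
  "down_closed C \<longleftrightarrow> (\<forall>a\<in>C. \<forall>b\<le>a. b \<in> C)"

lemma down_closedD: "down_closed C \<Longrightarrow> a \<in> C \<Longrightarrow> b \<le> a \<Longrightarrow> b \<in> C"
  unfolding down_closed_def by blast

lemma incseq_subseq_nat:
  fixes s :: "nat \<Rightarrow> nat"
  obtains r where "strict_mono r" "incseq (s \<circ> r)"
proof -
  obtain f where f: "strict_mono f" "monoseq (s \<circ> f)"
    using seq_monosub[of s] by (auto simp: o_def)
  show ?thesis
  proof (cases "incseq (s \<circ> f)")
    case False
    then have dec: "decseq (s \<circ> f)" using f(2) unfolding monoseq_iff by blast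
    obtain n0 where n0: "\<And>n. s (f n0) \<le> s (f n)"
      using ex_has_least_nat[of "\<lambda>_. True" 0 "\<lambda>n. s (f n)"] by blast
    have "s (f (n + n0)) = s (f n0)" for n
      using dec n0 unfolding decseq_def o_def by (metis le_add2 le_antisym)
    then have "incseq (s \<circ> (\<lambda>n. f (n + n0)))" by (simp add: incseq_def)
    moreover have "strict_mono (\<lambda>n. f (n + n0))"
      using f(1) by (simp add: strict_mono_def)
    ultimately show ?thesis using that by blast
  qed (use f that in blast)
qed

lemma subseq_incseq_on_finite:
  fixes f :: "nat \<Rightarrow> 'v \<Rightarrow> nat"
  assumes "finite I"
  obtains r where "strict_mono r" "\<And>i. i \<in> I \<Longrightarrow> incseq (\<lambda>n. f (r n) i)"
  using assms
proof (induction I arbitrary: thesis rule: finite_induct)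
  case empty
  show ?case by (rule empty.prems[of id]) (auto simp: strict_mono_def)
next
  case (insert i I)
  obtain r where r: "strict_mono r" "\<And>j. j \<in> I \<Longrightarrow> incseq (\<lambda>n. f (r n) j)"
    using insert.IH by blast
  obtain r' where r': "strict_mono r'" "incseq ((\<lambda>n. f (r n) i) \<circ> r')"
    by (rule incseq_subseq_nat)
  have "incseq (\<lambda>n. f (r (r' n)) j)" if "j \<in> I" for j
    using r(2)[OF that] r'(1) unfolding incseq_def by (meson strict_mono_less_eq)
  with r'(2) show ?case
    by (intro insert.prems[of "r \<circ> r'"] strict_mono_o r(1) r'(1)) (auto simp: o_def)
qed

lemma dickson:
  fixes f :: "nat \<Rightarrow> 'v::finite \<Rightarrow> nat"
  obtains i j where "i < j" "f i \<le> f j"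
proof -
  obtain r where r: "strict_mono r" "\<And>i. incseq (\<lambda>n. f (r n) i)"
    using subseq_incseq_on_finite[of UNIV f] by auto
  have "f (r 0) \<le> f (r 1)" using r(2) unfolding le_fun_def incseq_def by auto
  moreover have "r 0 < r 1" using r(1) by (simp add: strict_mono_def)
  ultimately show ?thesis using that by blast
qed

lemma down_closed_chain_stabilizes:
  fixes D :: "nat \<Rightarrow> ('v::finite \<Rightarrow> nat) set"
  assumes decreasing: "\<And>c. D (Suc c) \<subseteq> D c" and down_closed: "\<And>c. down_closed (D c)"
  obtains B where "\<And>c. c \<ge> B \<Longrightarrow> D c = D B"
proof (cases "finite {c. D (Suc c) \<noteq> D c}")
  case True
  then obtain B where B: "\<And>c. D (Suc c) \<noteq> D c \<Longrightarrow> c < B"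
    unfolding finite_nat_set_iff_bounded by blast
  have "D c = D B" if "c \<ge> B" for c
    using that
  proof (induction rule: dec_induct)
    case (step c)
    then show ?case using B[of c] by fastforce
  qed simp
  then show ?thesis by (rule that)
next
  case False
  define r where "r = enumerate {c. D (Suc c) \<noteq> D c}"
  have r: "strict_mono r" "\<And>n. D (Suc (r n)) \<noteq> D (r n)"
    using strict_mono_enumerate[OF False] enumerate_in_set[OF False] unfolding r_def by auto
  have "\<exists>x. x \<in> D (r n) \<and> x \<notin> D (Suc (r n))" for n
    using r(2)[of n] decreasing[of "r n"] by blast
  then obtain x where x: "\<And>n. x n \<in> D (r n)" "\<And>n. x n \<notin> D (Suc (r n))" by metis
  obtain i j where ij: "i < j" "x i \<le> x j" by (rule dickson[of x])
  have "D (r j) \<subseteq> D (Suc (r i))"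
    using decseq_SucI[of D, OF decreasing] Suc_leI[OF strict_monoD[OF r(1) ij(1)]]
    unfolding decseq_def by blast
  then have "x i \<in> D (Suc (r i))" using x(1)[of j] down_closedD[OF down_closed] ij(2) by blast
  with x(2) show ?thesis by blast
qed

section \<open>Bidegrees of down-closed sets of exponents\<close>

definition weighted_degree :: "('v::finite \<Rightarrow> int) \<Rightarrow> ('v \<Rightarrow> nat) \<Rightarrow> int" where
  "weighted_degree w a = (\<Sum>i\<in>UNIV. int (a i) * w i)"

definition total_degree :: "('v::finite \<Rightarrow> nat) \<Rightarrow> int" where
  "total_degree a = (\<Sum>i\<in>UNIV. int (a i))"

definition bideg_image :: "('v::finite \<Rightarrow> int) \<Rightarrow> ('v \<Rightarrow> nat) set \<Rightarrow> (int \<times> int) set" where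
  "bideg_image w C = (\<lambda>a. (weighted_degree w a, total_degree a)) ` C"

lemma bideg_image_Un: "bideg_image w (A \<union> B) = bideg_image w A \<union> bideg_image w B"
  unfolding bideg_image_def by (rule image_Un)

lemma bideg_image_UN: "bideg_image w (\<Union>x\<in>X. A x) = (\<Union>x\<in>X. bideg_image w (A x))"
  unfolding bideg_image_def by (rule image_UN)

lemma sum_fun_upd_UNIV:
  fixes g :: "nat \<Rightarrow> 'v::finite \<Rightarrow> int"
  shows "(\<Sum>i\<in>UNIV. g ((a(j := c)) i) i) = (\<Sum>i\<in>UNIV. g (a i) i) - g (a j) j + g c j"
proof -
  have "(\<Sum>i\<in>UNIV - {j}. g ((a(j := c)) i) i) = (\<Sum>i\<in>UNIV - {j}. g (a i) i)"
    by (rule sum.cong) auto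
  then show ?thesis
    using sum.remove[of UNIV j "\<lambda>i. g ((a(j := c)) i) i"] sum.remove[of UNIV j "\<lambda>i. g (a i) i"]
    by simp
qed

lemma weighted_degree_upd:
  "weighted_degree w (a(j := c)) = weighted_degree w a - int (a j) * w j + int c * w j"
  unfolding weighted_degree_def using sum_fun_upd_UNIV[of "\<lambda>x i. int x * w i" a j c] by simp

lemma total_degree_upd: "total_degree (a(j := c)) = total_degree a - int (a j) + int c"
  unfolding total_degree_def using sum_fun_upd_UNIV[of "\<lambda>x i. int x" a j c] by simp

lemma weighted_degree_ge_min_weight:
  assumes "\<And>i. i \<notin> I \<Longrightarrow> a i = 0" "\<And>i. i \<in> I \<Longrightarrow> m \<le> w i"
  shows "m * total_degree a \<le> weighted_degree w a"
proof -
  have "weighted_degree w a - m * total_degree a = (\<Sum>i\<in>UNIV. int (a i) * (w i - m))"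
    unfolding weighted_degree_def total_degree_def
    by (simp add: sum_distrib_left sum_subtractf algebra_simps)
  also have "\<dots> \<ge> 0"
  proof (rule sum_nonneg)
    show "0 \<le> int (a i) * (w i - m)" for i
      using assms by (cases "i \<in> I") auto
  qed
  finally show ?thesis by simp
qed

lemma eventually_linear_lower_edge_ray_closed:
  assumes supp: "\<And>a i. a \<in> E \<Longrightarrow> i \<notin> I \<Longrightarrow> a i = 0"
    and min_weight: "\<And>i. i \<in> I \<Longrightarrow> w j \<le> w i"
    and ray_closed: "\<And>a n. a \<in> E \<Longrightarrow> a(j := a j + n) \<in> E"
  shows "eventually_linear_lower_edge (bideg_image w E)"
proof (cases "E = {}")
  case True
  then show ?thesis
    by (simp add: bideg_image_def eventually_linear_lower_edge_def rows_vanish_def)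
next
  case False
  define excess where "excess a = weighted_degree w a - w j * total_degree a" for a
  have excess_nonneg: "excess a \<ge> 0" if "a \<in> E" for a
    using weighted_degree_ge_min_weight[of I a "w j" w] supp[OF that] min_weight
    unfolding excess_def by simp
  obtain a0 where "a0 \<in> E" using False by blast
  then obtain amin where amin: "amin \<in> E" "\<And>a. a \<in> E \<Longrightarrow> nat (excess amin) \<le> nat (excess a)"
    using ex_has_least_nat[of "\<lambda>a. a \<in> E" a0 "\<lambda>a. nat (excess a)"] by blast
  have "linear_lower_edge (bideg_image w E) (w j) (excess amin)"
    unfolding linear_lower_edge_def
  proof (rule eventually_at_top_linorderI[of "total_degree amin"], intro conjI allI impI)
    fix k assume k: "total_degree amin \<le> k"
    define a' where "a' = amin(j := amin j + nat (k - total_degree amin))"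
    have "a' \<in> E" unfolding a'_def by (rule ray_closed[OF amin(1)])
    moreover have "total_degree a' = k" "weighted_degree w a' = w j * k + excess amin"
      using k unfolding a'_def total_degree_upd weighted_degree_upd excess_def
      by (auto simp: algebra_simps)
    ultimately show "(w j * k + excess amin, k) \<in> bideg_image w E"
      unfolding bideg_image_def by (intro image_eqI[of _ _ a']) auto
    fix d assume "(d, k) \<in> bideg_image w E"
    then obtain a where a: "a \<in> E" "d = weighted_degree w a" "k = total_degree a"
      unfolding bideg_image_def by auto
    have "excess amin \<le> excess a"
      using amin(2)[OF a(1)] excess_nonneg[OF a(1)] by linarith
    then show "w j * k + excess amin \<le> d"
      unfolding a(2,3) excess_def by simp
  qed
  then show ?thesis unfolding eventually_linear_lower_edge_def by blast
qed

definition slice :: "('v \<Rightarrow> nat) set \<Rightarrow> 'v \<Rightarrow> nat \<Rightarrow> ('v \<Rightarrow> nat) set" where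
  "slice C j c = {b. b j = 0 \<and> b(j := c) \<in> C}"

lemma down_closed_slice:
  assumes "down_closed C"
  shows "down_closed (slice C j c)"
  unfolding down_closed_def
proof (intro ballI allI impI)
  fix a b assume "a \<in> slice C j c" "b \<le> a"
  then have "a j = 0" "a(j := c) \<in> C" "b j = 0" "b(j := c) \<le> a(j := c)"
    unfolding slice_def le_fun_def by (auto dest: spec[of _ j])
  then show "b \<in> slice C j c"
    using down_closedD[OF assms] unfolding slice_def by blast
qed

lemma slice_Suc_subset: "down_closed C \<Longrightarrow> slice C j (Suc c) \<subseteq> slice C j c"
  unfolding slice_def by (auto elim!: down_closedD simp: le_fun_def)

lemma bideg_image_slice:
  "bideg_image w ((\<lambda>b. b(j := c)) ` slice C j c) = shift (int c * w j, int c) (bideg_image w (slice C j c))"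
  unfolding bideg_image_def shift_def image_image slice_def
  by (rule image_cong) (simp_all add: weighted_degree_upd total_degree_upd)

lemma down_closed_slice_decomposition:
  fixes C :: "('v::finite \<Rightarrow> nat) set"
  assumes "down_closed C"
  obtains B where
    "C = {a \<in> C. \<forall>n. a(j := a j + n) \<in> C} \<union> (\<Union>c<B. (\<lambda>b. b(j := c)) ` slice C j c)"
proof -
  obtain B where B: "\<And>c. c \<ge> B \<Longrightarrow> slice C j c = slice C j B"
    using down_closed_chain_stabilizes[of "slice C j"] slice_Suc_subset[OF assms]
      down_closed_slice[OF assms] by blast
  have ray: "a(j := a j + n) \<in> C" if "a \<in> C" "a j \<ge> B" for a n
  proof -
    have "a(j := 0) \<in> slice C j (a j)" using that(1) unfolding slice_def by simp
    then have "a(j := 0) \<in> slice C j (a j + n)"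
      using B[of "a j"] B[of "a j + n"] that(2) by simp
    then show ?thesis unfolding slice_def by simp
  qed
  have low: "a \<in> (\<lambda>b. b(j := a j)) ` slice C j (a j)" if "a \<in> C" for a
    using that unfolding slice_def by (intro image_eqI[of _ _ "a(j := 0)"]) auto
  show ?thesis
  proof (rule that, intro equalityI subsetI)
    fix a assume a: "a \<in> C"
    show "a \<in> {a \<in> C. \<forall>n. a(j := a j + n) \<in> C} \<union> (\<Union>c<B. (\<lambda>b. b(j := c)) ` slice C j c)"
    proof (cases "a j < B")
      case True
      then show ?thesis using low[OF a] by blast
    next
      case False
      then show ?thesis using ray[OF a] a by simp
    qed
  next
    fix a assume "a \<in> {a \<in> C. \<forall>n. a(j := a j + n) \<in> C} \<union> (\<Union>c<B. (\<lambda>b. b(j := c)) ` slice C j c)"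
    then show "a \<in> C" unfolding slice_def by blast
  qed
qed

lemma eventually_linear_lower_edge_down_closed_on:
  fixes C :: "('v::finite \<Rightarrow> nat) set"
  assumes "down_closed C" "\<And>a i. a \<in> C \<Longrightarrow> i \<notin> I \<Longrightarrow> a i = 0"
  shows "eventually_linear_lower_edge (bideg_image w C)"
  using assms
proof (induction "card I" arbitrary: I C rule: less_induct)
  case less
  show ?case
  proof (cases "I = {}")
    case True
    then have "total_degree a = 0" if "a \<in> C" for a
      using less.prems(2)[OF that] unfolding total_degree_def by simp
    then have "rows_vanish (bideg_image w C)"
      unfolding rows_vanish_def bideg_image_def eventually_at_top_linorder
      by (intro exI[of _ 1]) auto
    then show ?thesis unfolding eventually_linear_lower_edge_def by blast
  next
    case False
    have "Min (w ` I) \<in> w ` I" using False by (intro Min_in) auto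
    then obtain j where "j \<in> I" "w j = Min (w ` I)" by auto
    then have j: "j \<in> I" "\<And>i. i \<in> I \<Longrightarrow> w j \<le> w i" by simp_all
    obtain B where C_eq:
      "C = {a \<in> C. \<forall>n. a(j := a j + n) \<in> C} \<union> (\<Union>c<B. (\<lambda>b. b(j := c)) ` slice C j c)"
      using down_closed_slice_decomposition[OF less.prems(1)] by blast
    have "eventually_linear_lower_edge (bideg_image w {a \<in> C. \<forall>n. a(j := a j + n) \<in> C})"
      by (rule eventually_linear_lower_edge_ray_closed[of _ I])
         (use less.prems(2) j(2) in \<open>auto simp: add.assoc\<close>)
    moreover have "eventually_linear_lower_edge (bideg_image w (slice C j c))" for c
    proof (rule less.hyps[of "I - {j}"])
      show "card (I - {j}) < card I"
        using j(1) by (intro card_Diff1_less) auto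
      show "down_closed (slice C j c)"
        by (rule down_closed_slice[OF less.prems(1)])
      show "a i = 0" if "a \<in> slice C j c" "i \<notin> I - {j}" for a i
        using that less.prems(2)[of "a(j := c)" i] unfolding slice_def by (cases "i = j") auto
    qed
    ultimately show ?thesis
      by (subst C_eq, unfold bideg_image_Un bideg_image_UN bideg_image_slice)
         (intro eventually_linear_lower_edge_Un eventually_linear_lower_edge_UN
           eventually_linear_lower_edge_shift; simp)
  qed
qed

corollary eventually_linear_lower_edge_down_closed:
  fixes C :: "('v::finite \<Rightarrow> nat) set"
  assumes "down_closed C"
  shows "eventually_linear_lower_edge (bideg_image w C)"
  using eventually_linear_lower_edge_down_closed_on[OF assms, of UNIV] by simp

lemma mirror_shift_bideg_image:
  "mirror (shift q (bideg_image w C)) = shift (- fst q, snd q) (bideg_image (- w) C)"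
proof -
  have "weighted_degree (- w) a = - weighted_degree w a" for a
    unfolding weighted_degree_def by (simp add: sum_negf)
  then show ?thesis
    unfolding mirror_def shift_def bideg_image_def image_image by (simp add: case_prod_unfold)
qed

lemma eventually_linear_lower_edge_UN_shift_down_closed:
  assumes "finite X" "\<And>x. x \<in> X \<Longrightarrow> down_closed (C x)"
  shows "eventually_linear_lower_edge (\<Union>x\<in>X. shift (s x) (bideg_image w (C x)))"
  using assms
  by (intro eventually_linear_lower_edge_UN eventually_linear_lower_edge_shift
      eventually_linear_lower_edge_down_closed)

section \<open>Homogeneous components in a bigraded module\<close>

lemma poly_mapping_sum_single:
  "p = (\<Sum>a\<in>Poly_Mapping.keys p. Poly_Mapping.single a (Poly_Mapping.lookup p a))"
  by (rule poly_mapping_eqI) (auto simp: lookup_sum lookup_single when_def in_keys_iff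
      sum.delta' [where a="_" and b="\<lambda>x. Poly_Mapping.lookup p _"] sum.neutral intro: sym)

definition monomial :: "('v::finite \<Rightarrow> nat) \<Rightarrow> ('v, 'k::zero_neq_one) mpoly" where
  "monomial b = Poly_Mapping.single (Abs_poly_mapping b) 1"

lemma mono_bideg_Abs_poly_mapping:
  "mono_bideg dg (Abs_poly_mapping b) = (weighted_degree dg b, total_degree b)"
  unfolding mono_bideg_def weighted_degree_def total_degree_def by simp

lemma bihomogeneous_single:
  "bihomogeneous dg (Poly_Mapping.single a c) (fst (mono_bideg dg a)) (snd (mono_bideg dg a))"
  unfolding bihomogeneous_def by (simp split: if_splits)

definition hom_decomposition :: "(int \<Rightarrow> int \<Rightarrow> 'm::ab_group_add set) \<Rightarrow> 'm \<Rightarrow> (int \<times> int \<Rightarrow> 'm) \<Rightarrow> bool" where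
  "hom_decomposition Mg m f \<longleftrightarrow>
     finite {q. f q \<noteq> 0} \<and> (\<forall>d k. f (d, k) \<in> Mg d k) \<and> m = (\<Sum>q\<in>{q. f q \<noteq> 0}. f q)"

definition hom_component :: "(int \<Rightarrow> int \<Rightarrow> 'm::ab_group_add set) \<Rightarrow> 'm \<Rightarrow> int \<times> int \<Rightarrow> 'm" where
  "hom_component Mg m = (THE f. hom_decomposition Mg m f)"

definition nonvanishing_exponents ::
  "(('v::finite, 'k::field) mpoly \<Rightarrow> 'm::ab_group_add \<Rightarrow> 'm) \<Rightarrow> 'm \<Rightarrow> ('v \<Rightarrow> nat) set" where
  "nonvanishing_exponents scale h = {b. scale (monomial b) h \<noteq> 0}"

lemma sum_nonzero_eq:
  assumes "finite A" "{q. f q \<noteq> 0} \<subseteq> A"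
  shows "(\<Sum>q\<in>{q. f q \<noteq> 0}. f q) = sum f A"
  using assms by (intro sum.mono_neutral_left) auto

lemma bigraded_moduleD:
  assumes "bigraded_module dg scale Mg"
  shows "module scale"
    and "0 \<in> Mg d k"
    and "x \<in> Mg d k \<Longrightarrow> y \<in> Mg d k \<Longrightarrow> x + y \<in> Mg d k"
    and "bihomogeneous dg p e j \<Longrightarrow> x \<in> Mg d k \<Longrightarrow> scale p x \<in> Mg (d + e) (k + j)"
    and "\<exists>!f. finite {q. f q \<noteq> 0} \<and> (\<forall>d k. f (d, k) \<in> Mg d k) \<and> m = (\<Sum>q\<in>{q. f q \<noteq> 0}. f q)"
  using assms unfolding bigraded_module_def by simp_all

definition support_bidegrees :: "(int \<Rightarrow> int \<Rightarrow> 'm::zero set) \<Rightarrow> (int \<times> int) set" where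
  "support_bidegrees Mg = {(d, k). Mg d k \<noteq> {0}}"

definition generator_components ::
  "(int \<Rightarrow> int \<Rightarrow> 'm::ab_group_add set) \<Rightarrow> 'm set \<Rightarrow> ('m \<times> (int \<times> int)) set" where
  "generator_components Mg G = {(hom_component Mg g q, q) | g q. g \<in> G \<and> hom_component Mg g q \<noteq> 0}"

context
  fixes dg :: "'v::finite \<Rightarrow> int"
    and scale :: "('v, 'k::field) mpoly \<Rightarrow> 'm::ab_group_add \<Rightarrow> 'm"
    and Mg :: "int \<Rightarrow> int \<Rightarrow> 'm set"
  assumes bigraded: "bigraded_module dg scale Mg"
begin

interpretation module scale
  by (rule bigraded_moduleD(1)[OF bigraded])

lemmas zero_mem_component = bigraded_moduleD(2)[OF bigraded]
   and add_mem_component = bigraded_moduleD(3)[OF bigraded]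

lemma scale_single_mem_component:
  assumes "h \<in> Mg d k"
  shows "scale (Poly_Mapping.single a c) h \<in> Mg (d + fst (mono_bideg dg a)) (k + snd (mono_bideg dg a))"
  by (rule bigraded_moduleD(4)[OF bigraded bihomogeneous_single assms])

lemma scale_monomial_mem_component:
  assumes "h \<in> Mg d k"
  shows "scale (monomial b) h \<in> Mg (d + weighted_degree dg b) (k + total_degree b)"
  using scale_single_mem_component[OF assms, of "Abs_poly_mapping b" 1]
  unfolding monomial_def mono_bideg_Abs_poly_mapping by simp

lemma ex1_hom_decomposition: "\<exists>!f. hom_decomposition Mg m f"
  unfolding hom_decomposition_def by (rule bigraded_moduleD(5)[OF bigraded])

lemma hom_decomposition_hom_component: "hom_decomposition Mg m (hom_component Mg m)"
  unfolding hom_component_def by (rule theI'[OF ex1_hom_decomposition])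

lemma hom_component_eqI: "hom_decomposition Mg m f \<Longrightarrow> hom_component Mg m = f"
  using ex1_hom_decomposition hom_decomposition_hom_component by blast

lemma hom_component_mem: "hom_component Mg m q \<in> Mg (fst q) (snd q)"
  using hom_decomposition_hom_component unfolding hom_decomposition_def by (cases q) simp

lemma finite_hom_component_support: "finite {q. hom_component Mg m q \<noteq> 0}"
  using hom_decomposition_hom_component unfolding hom_decomposition_def by blast

lemma sum_hom_component: "(\<Sum>q\<in>{q. hom_component Mg m q \<noteq> 0}. hom_component Mg m q) = m"
  using hom_decomposition_hom_component unfolding hom_decomposition_def by simp

lemma hom_component_add: "hom_component Mg (x + y) q = hom_component Mg x q + hom_component Mg y q"
proof -
  let ?fx = "hom_component Mg x" and ?fy = "hom_component Mg y"
  define A where "A = {q. ?fx q \<noteq> 0} \<union> {q. ?fy q \<noteq> 0}"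
  have A: "finite A" "{q. ?fx q + ?fy q \<noteq> 0} \<subseteq> A"
    unfolding A_def using finite_hom_component_support by auto
  have "(\<Sum>q\<in>{q. ?fx q + ?fy q \<noteq> 0}. ?fx q + ?fy q) = (\<Sum>q\<in>A. ?fx q + ?fy q)"
    by (rule sum_nonzero_eq[OF A])
  also have "\<dots> = sum ?fx A + sum ?fy A" by (rule sum.distrib)
  also have "\<dots> = x + y"
    using sum_nonzero_eq[OF A(1), of ?fx] sum_nonzero_eq[OF A(1), of ?fy]
    unfolding A_def by (simp add: sum_hom_component)
  moreover have "?fx (d, k) + ?fy (d, k) \<in> Mg d k" for d k
    using add_mem_component hom_component_mem[of x "(d, k)"] hom_component_mem[of y "(d, k)"] by simp
  ultimately have "hom_decomposition Mg (x + y) (\<lambda>q. ?fx q + ?fy q)"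
    unfolding hom_decomposition_def using finite_subset[OF A(2,1)] by simp
  then show ?thesis by (simp add: hom_component_eqI)
qed

lemma hom_component_zero: "hom_component Mg 0 q = 0"
  using hom_component_add[of 0 0] by simp

lemma hom_component_homogeneous:
  assumes "x \<in> Mg d k"
  shows "hom_component Mg x q = (if q = (d, k) then x else 0)"
proof -
  have sub: "{q. (if q = (d, k) then x else 0) \<noteq> 0} \<subseteq> {(d, k)}" by auto
  have "hom_decomposition Mg x (\<lambda>q. if q = (d, k) then x else 0)"
    unfolding hom_decomposition_def sum_nonzero_eq[OF _ sub]
    using finite_subset[OF sub] assms zero_mem_component by auto
  then show ?thesis by (simp add: hom_component_eqI)
qed

lemma hom_component_sum:
  "finite T \<Longrightarrow> hom_component Mg (\<Sum>i\<in>T. z i) q = (\<Sum>i\<in>T. hom_component Mg (z i) q)"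
  by (induction T rule: finite_induct) (simp_all add: hom_component_zero hom_component_add)

lemma scale_monomial_eq_zero_mono:
  assumes "b' \<le> b" "scale (monomial b') h = 0"
  shows "scale (monomial b) h = 0"
proof -
  have "Abs_poly_mapping b = Abs_poly_mapping (\<lambda>i. b i - b' i) + Abs_poly_mapping b'"
    by (rule poly_mapping_eqI) (use assms(1) in \<open>auto simp: lookup_add le_fun_def\<close>)
  then have "(monomial b :: ('v, 'k) mpoly) = monomial (\<lambda>i. b i - b' i) * monomial b'"
    unfolding monomial_def by (simp add: mult_single)
  then have "scale (monomial b) h = scale (monomial (\<lambda>i. b i - b' i)) (scale (monomial b') h)"
    by (simp only: scale_scale)
  with assms(2) show ?thesis by simp
qed

lemma down_closed_nonvanishing_exponents: "down_closed (nonvanishing_exponents scale h)"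
  unfolding down_closed_def nonvanishing_exponents_def
  using scale_monomial_eq_zero_mono by blast

lemma lookup_mem_nonvanishing_exponents:
  assumes "scale (Poly_Mapping.single a c) h \<noteq> 0"
  shows "Poly_Mapping.lookup a \<in> nonvanishing_exponents scale h"
proof -
  have "scale (Poly_Mapping.single a c) h = scale (Poly_Mapping.single 0 c) (scale (monomial (Poly_Mapping.lookup a)) h)"
    unfolding monomial_def by (simp add: scale_scale mult_single)
  with assms show ?thesis unfolding nonvanishing_exponents_def by (auto simp del: scale_scale)
qed

lemma hom_component_scale_neq_zero:
  assumes h: "h \<in> Mg (fst q) (snd q)" and nz: "hom_component Mg (scale r h) p \<noteq> 0"
  shows "p \<in> shift q (bideg_image dg (nonvanishing_exponents scale h))"
proof -
  let ?term = "\<lambda>a. scale (Poly_Mapping.single a (Poly_Mapping.lookup r a)) h"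
  have "scale r h = (\<Sum>a\<in>Poly_Mapping.keys r. ?term a)"
    by (subst poly_mapping_sum_single[of r]) (simp add: scale_sum_left)
  with nz obtain a where a: "hom_component Mg (?term a) p \<noteq> 0"
    by (auto simp: hom_component_sum elim: sum.not_neutral_contains_not_neutral)
  have "?term a \<in> Mg (fst q + fst (mono_bideg dg a)) (snd q + snd (mono_bideg dg a))"
    by (rule scale_single_mem_component[OF h])
  with a have "p = (fst q + fst (mono_bideg dg a), snd q + snd (mono_bideg dg a))" "?term a \<noteq> 0"
    by (simp_all add: hom_component_homogeneous split: if_splits)
  moreover have "mono_bideg dg a = (weighted_degree dg (Poly_Mapping.lookup a), total_degree (Poly_Mapping.lookup a))"
    using mono_bideg_Abs_poly_mapping[of dg "Poly_Mapping.lookup a"] by simp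
  moreover have "Poly_Mapping.lookup a \<in> nonvanishing_exponents scale h"
    using lookup_mem_nonvanishing_exponents calculation(2) by blast
  ultimately show ?thesis
    unfolding shift_def bideg_image_def image_image
    by (intro image_eqI[of _ _ "Poly_Mapping.lookup a"]) (auto simp: prod_eq_iff)
qed

abbreviation component_supports :: "('m \<times> (int \<times> int)) set \<Rightarrow> (int \<times> int) set" where
  "component_supports H \<equiv> (\<Union>x\<in>H. shift (snd x) (bideg_image dg (nonvanishing_exponents scale (fst x))))"

lemma hom_component_span_neq_zero:
  assumes H: "\<And>h q. (h, q) \<in> H \<Longrightarrow> h \<in> Mg (fst q) (snd q)"
    and "x \<in> span (fst ` H)" "hom_component Mg x p \<noteq> 0"
  shows "p \<in> component_supports H"
  using assms(2,3)
proof (induction arbitrary: p rule: span_induct_alt)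
  case base
  then show ?case by (simp add: hom_component_zero)
next
  case (step r h y)
  then obtain q where hq: "(h, q) \<in> H" by auto
  show ?case
  proof (cases "hom_component Mg (scale r h) p = 0")
    case True
    then show ?thesis using step by (simp add: hom_component_add)
  next
    case False
    then show ?thesis
      by (intro UN_I[OF hq]) (simp add: hom_component_scale_neq_zero[OF H[OF hq]])
  qed
qed

lemma generator_components_homogeneous:
  "(h, q) \<in> generator_components Mg G \<Longrightarrow> h \<in> Mg (fst q) (snd q)"
  unfolding generator_components_def using hom_component_mem by blast

lemma span_generator_components:
  assumes "span G = UNIV"
  shows "span (fst ` generator_components Mg G) = UNIV"
proof -
  have "g \<in> span (fst ` generator_components Mg G)" if g: "g \<in> G" for g
  proof -
    have "hom_component Mg g q \<in> span (fst ` generator_components Mg G)"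
      if "hom_component Mg g q \<noteq> 0" for q
    proof (rule span_base)
      have "(hom_component Mg g q, q) \<in> generator_components Mg G"
        using g that unfolding generator_components_def by blast
      then show "hom_component Mg g q \<in> fst ` generator_components Mg G"
        by (rule rev_image_eqI) simp
    qed
    then have "(\<Sum>q\<in>{q. hom_component Mg g q \<noteq> 0}. hom_component Mg g q) \<in> span (fst ` generator_components Mg G)"
      by (intro span_sum) simp
    then show ?thesis by (simp only: sum_hom_component)
  qed
  then have "span G \<subseteq> span (fst ` generator_components Mg G)"
    by (intro span_minimal subsetI subspace_span)
  with assms show ?thesis by blast
qed

lemma finite_generator_components:
  assumes "finite G"
  shows "finite (generator_components Mg G)"
proof -
  have "generator_components Mg G \<subseteq> (\<lambda>(g, q). (hom_component Mg g q, q)) ` (SIGMA g:G. {q. hom_component Mg g q \<noteq> 0})"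
    unfolding generator_components_def by auto
  moreover have "finite (SIGMA g:G. {q. hom_component Mg g q \<noteq> 0})"
    using assms finite_hom_component_support by (intro finite_SigmaI)
  ultimately show ?thesis by (rule finite_subset[OF _ finite_imageI])
qed

lemma support_bidegrees_eq:
  assumes "span G = UNIV"
  shows "support_bidegrees Mg = component_supports (generator_components Mg G)"
proof (intro equalityI subsetI)
  fix p assume "p \<in> support_bidegrees Mg"
  then have "Mg (fst p) (snd p) \<noteq> {0}" unfolding support_bidegrees_def by (cases p) simp
  then obtain x where x: "x \<in> Mg (fst p) (snd p)" "x \<noteq> 0"
    using zero_mem_component by blast
  then have "hom_component Mg x p \<noteq> 0"
    by (simp add: hom_component_homogeneous)
  moreover have "x \<in> span (fst ` generator_components Mg G)"
    by (simp add: span_generator_components[OF assms])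
  ultimately show "p \<in> component_supports (generator_components Mg G)"
    by (intro hom_component_span_neq_zero[OF generator_components_homogeneous])
next
  fix p assume "p \<in> component_supports (generator_components Mg G)"
  then obtain h q b where hq: "(h, q) \<in> generator_components Mg G"
    and b: "b \<in> nonvanishing_exponents scale h"
    and p: "p = (weighted_degree dg b, total_degree b) + q"
    unfolding shift_def bideg_image_def by auto
  have "scale (monomial b) h \<in> Mg (fst q + weighted_degree dg b) (snd q + total_degree b)"
    by (rule scale_monomial_mem_component[OF generator_components_homogeneous[OF hq]])
  moreover have "scale (monomial b) h \<noteq> 0"
    using b unfolding nonvanishing_exponents_def by simp
  ultimately show "p \<in> support_bidegrees Mg"
    unfolding support_bidegrees_def p by (cases q) (simp add: add.commute, blast)
qed

end

theorem proposition2p5: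
  fixes dg :: "'v::finite \<Rightarrow> int"
    and scale :: "('v, 'k::field) mpoly \<Rightarrow> 'm::ab_group_add \<Rightarrow> 'm"
    and Mg :: "int \<Rightarrow> int \<Rightarrow> 'm set"
  assumes "\<And>i. dg i \<ge> 1"
    and "bigraded_module dg scale Mg"
    and "finitely_generated_module scale"
  shows "(\<exists>k0. \<forall>k\<ge>k0. \<forall>d. Mg d k = {0})
       \<or> (\<exists>a b c e k0 :: int. \<forall>k\<ge>k0.
             Mg (a * k + b) k \<noteq> {0} \<and> (\<forall>d. Mg d k \<noteq> {0} \<longrightarrow> a * k + b \<le> d) \<and>
             Mg (c * k + e) k \<noteq> {0} \<and> (\<forall>d. Mg d k \<noteq> {0} \<longrightarrow> d \<le> c * k + e))"
proof -
  obtain G where G: "finite G" "module.span scale G = UNIV"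
    using assms(3) unfolding finitely_generated_module_def by blast
  let ?H = "generator_components Mg G"
  let ?C = "\<lambda>x. nonvanishing_exponents scale (fst x)"
  have support: "support_bidegrees Mg = (\<Union>x\<in>?H. shift (snd x) (bideg_image dg (?C x)))"
    by (rule support_bidegrees_eq[OF assms(2) G(2)])
  have fin: "finite ?H" by (rule finite_generator_components[OF assms(2) G(1)])
  have down_closed: "down_closed (?C x)" for x
    by (rule down_closed_nonvanishing_exponents[OF assms(2)])
  have lower: "eventually_linear_lower_edge (support_bidegrees Mg)"
    unfolding support using fin down_closed by (rule eventually_linear_lower_edge_UN_shift_down_closed)
  have "eventually_linear_lower_edge (mirror (support_bidegrees Mg))"
    unfolding support mirror_UN mirror_shift_bideg_image
    using fin down_closed by (rule eventually_linear_lower_edge_UN_shift_down_closed)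
  from eventually_linear_edges[OF lower this] show ?thesis
    unfolding support_bidegrees_def by simp
qed

end
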